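(* Let $\delta\in(0,1)$ and $\lambda_0\in(0,\pi)$. Let $\{U_t,t\in\mathbb{Z}\}$ be a zero-mean weakly stationary process with spectral density $f_U$ which is continuous on $[0,\pi]$ and satisfies $\inf_{\lambda\in[0,\pi]}f_U(\lambda)>0$. Let $\{X_{t,\delta},t\in\mathbb{Z}\}$ be a zero-mean weakly stationary process with spectral density $$f_\delta(\lambda)=\frac{f_U(\lambda)}{|1-(1-\delta)e^{-i(\lambda-\lambda_0)}|^{2}\,|1-(1-\delta)e^{-i(\lambda+\lambda_0)}|^{2}},\qquad \lambda\in\mathbb{R}.$$ Let $(a_{1,\delta},a_{2,\delta})$ be the unique minimizer of $(c_1,c_2)\mapsto \mathrm{E}(X_{t,\delta}-c_1X_{t-1,\delta}-c_2X_{t-2,\delta})^2$, and when $a_{2,\delta}<0$ define $\lambda_{0,\delta}=\arccos\big(a_{1,\delta}(1-a_{2,\delta})/(-4a_{2,\delta})\big)$. Then (i) $\lim_{\delta\to0}(a_{1,\delta},a_{2,\delta})=(2\cos(\lambda_0),-1)$; (ii) $\lim_{\delta\to0}\lambda_{0,\delta}=\lambda_0$. *)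

theory Defs
  imports "HOL-Probability.Probability"
begin

definition has_spectral_density :: "'a measure \<Rightarrow> (int \<Rightarrow> 'a \<Rightarrow> real) \<Rightarrow> (real \<Rightarrow> real) \<Rightarrow> bool" where
  "has_spectral_density M X f \<longleftrightarrow>
     prob_space M \<and>
     (\<forall>l\<in>{-pi..pi}. 0 \<le> f l) \<and>
     set_integrable lborel {-pi..pi} f \<and>
     (\<forall>t. X t \<in> borel_measurable M \<and> integrable M (\<lambda>\<omega>. (X t \<omega>)\<^sup>2) \<and> integral\<^sup>L M (X t) = 0) \<and>
     (\<forall>t s. complex_of_real (integral\<^sup>L M (\<lambda>\<omega>. X t \<omega> * X s \<omega>)) =
            (LINT l:{-pi..pi}|lborel. exp (\<i> * of_int (t - s) * of_real l) * of_real (f l)))"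

end

theory Submission
  imports Defs
begin

(* With r = 1 - delta, the spectral density of X_delta is f_U / P_delta, where
   P_delta(l) = |1 - r e^(-i(l - lam0))|^2 |1 - r e^(-i(l + lam0))|^2
              = delta^4 + 4 r delta^2 (1 - cos l cos lam0) + 4 r^2 (cos l - cos lam0)^2.
   Near lam0 we have P_delta <= 13 delta^2, so the variance gamma(0) grows at least like 1/delta,
   while P_delta >= (cos l - cos lam0)^2 keeps the weighted deviation of cos(k l) from cos(k lam0)
   of the order sqrt gamma(0). Hence the autocorrelations gamma(k)/gamma(0) tend to cos(k lam0)
   for k = 1, 2. The minimiser solves the Yule-Walker equations, whose solution depends
   continuously on the autocorrelations and equals (2 cos lam0, -1) at (cos lam0, cos 2 lam0);
   finally arccos(a1 (1 - a2) / (-4 a2)) tends to arccos(cos lam0) = lam0. *)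

lemma cmod_one_minus_exp_sq:
  fixes r x :: real
  shows "(cmod (1 - complex_of_real r * exp (- \<i> * complex_of_real x)))\<^sup>2 = 1 - 2*r*cos x + r\<^sup>2"
proof -
  have "(cmod (1 - complex_of_real r * exp (- \<i> * complex_of_real x)))\<^sup>2
      = (1 - r * cos x)\<^sup>2 + (r * sin x)\<^sup>2"
    by (simp add: cmod_power2 Re_exp Im_exp)
  also have "\<dots> = 1 - 2*r*cos x + r\<^sup>2"
    using sin_cos_squared_add[of x] by algebra
  finally show ?thesis .
qed

definition ar2_denom :: "real \<Rightarrow> real \<Rightarrow> real \<Rightarrow> real" where
  "ar2_denom lam0 d l =
     (1 - 2*(1-d)*cos (l - lam0) + (1-d)\<^sup>2) * (1 - 2*(1-d)*cos (l + lam0) + (1-d)\<^sup>2)"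

lemma ar2_denom_eq:
  "ar2_denom lam0 d l
     = d^4 + 4*(1-d)*d\<^sup>2*(1 - cos l * cos lam0) + 4*(1-d)\<^sup>2*(cos l - cos lam0)\<^sup>2"
  unfolding ar2_denom_def cos_diff cos_add
  using sin_cos_squared_add[of l] sin_cos_squared_add[of lam0] by algebra

lemma abs_cos_mult_cos_le_one: "\<bar>cos (x::real) * cos y\<bar> \<le> 1"
  by (simp add: abs_mult mult_le_one)

lemma ar2_denom_lower:
  assumes "0 < d" "d \<le> 1/2"
  shows "d^4 \<le> ar2_denom lam0 d l" "0 < ar2_denom lam0 d l"
    and "(cos l - cos lam0)\<^sup>2 \<le> ar2_denom lam0 d l"
proof -
  have middle: "0 \<le> 4*(1-d)*d\<^sup>2*(1 - cos l * cos lam0)"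
    using assms abs_cos_mult_cos_le_one[of l lam0] by (simp add: abs_le_iff)
  have "(1/2)\<^sup>2 \<le> (1-d)\<^sup>2"
    using assms by (intro power_mono) auto
  then have "(cos l - cos lam0)\<^sup>2 \<le> 4*(1-d)\<^sup>2*(cos l - cos lam0)\<^sup>2"
    using mult_right_mono[of 1 "4*(1-d)\<^sup>2" "(cos l - cos lam0)\<^sup>2"] by (simp add: power2_eq_square)
  moreover have "0 < d^4" using assms by simp
  ultimately show "d^4 \<le> ar2_denom lam0 d l" "0 < ar2_denom lam0 d l"
    and "(cos l - cos lam0)\<^sup>2 \<le> ar2_denom lam0 d l"
    unfolding ar2_denom_eq using middle by (smt (verit) zero_le_power2 mult_nonneg_nonneg)+
qed

lemma abs_cos_diff_le: "\<bar>cos (x::real) - cos y\<bar> \<le> \<bar>x - y\<bar>"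
proof -
  have "\<bar>cos x - cos y\<bar> = 2 * \<bar>sin ((x + y) / 2)\<bar> * \<bar>sin ((y - x) / 2)\<bar>"
    by (simp add: cos_diff_cos abs_mult)
  also have "\<dots> \<le> 2 * 1 * \<bar>(y - x) / 2\<bar>"
    by (intro mult_mono abs_sin_x_le_abs_x) auto
  finally show ?thesis by simp
qed

lemma ar2_denom_upper:
  assumes "0 < d" "d < 1" "\<bar>l - lam0\<bar> \<le> d"
  shows "ar2_denom lam0 d l \<le> 13 * d\<^sup>2"
proof -
  have "d^4 \<le> d\<^sup>2" using assms by (simp add: power_decreasing)
  moreover have "4*(1-d)*d\<^sup>2*(1 - cos l * cos lam0) \<le> 4*1*d\<^sup>2*2"
    using assms abs_cos_mult_cos_le_one[of l lam0] by (intro mult_mono) (auto simp: abs_le_iff)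
  moreover have "(cos l - cos lam0)\<^sup>2 \<le> d\<^sup>2"
    using abs_cos_diff_le[of l lam0] assms(3) by (metis abs_ge_zero order_trans power2_abs power_mono)
  then have "4*(1-d)\<^sup>2*(cos l - cos lam0)\<^sup>2 \<le> 4*1*d\<^sup>2"
    using assms by (intro mult_mono) (auto simp: power_le_one)
  ultimately show ?thesis unfolding ar2_denom_eq by linarith
qed

lemma abs_cos_int_mult_diff_le:
  fixes x y :: real
  assumes "k \<in> {1, 2}"
  shows "\<bar>cos (of_int k * x) - cos (of_int k * y)\<bar> \<le> 4 * \<bar>cos x - cos y\<bar>"
proof (cases "k = 1")
  case False
  with assms have "k = 2" by simp
  then have "cos (of_int k * x) - cos (of_int k * y) = 2 * (cos x - cos y) * (cos x + cos y)"
    by (simp only: of_int_numeral cos_double_cos) (simp add: power2_eq_square algebra_simps)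
  moreover have "\<bar>cos x + cos y\<bar> \<le> 2"
    using abs_cos_le_one[of x] abs_cos_le_one[of y] by linarith
  ultimately have "\<bar>cos (of_int k * x) - cos (of_int k * y)\<bar> \<le> 2 * \<bar>cos x - cos y\<bar> * 2"
    by (simp only: abs_mult abs_numeral) (intro mult_left_mono, auto)
  then show ?thesis by simp
qed simp

lemma abs_le_add_square_div:
  fixes y e :: real
  assumes "0 < e"
  shows "\<bar>y\<bar> \<le> e + y\<^sup>2 / e"
proof -
  have "2 * e * \<bar>y\<bar> \<le> e\<^sup>2 + y\<^sup>2"
    using sum_squares_bound[of e "\<bar>y\<bar>"] by simp
  moreover have "0 \<le> e * \<bar>y\<bar>" using assms by simp
  ultimately have "e * \<bar>y\<bar> \<le> e\<^sup>2 + y\<^sup>2" by linarith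
  then show ?thesis using assms by (simp add: field_simps power2_eq_square)
qed

lemma weighted_integral_deviation:
  fixes h g \<phi> :: "'a \<Rightarrow> real"
  assumes h: "integrable M h" "\<And>x. 0 \<le> h x"
    and h\<phi>: "integrable M (\<lambda>x. h x * \<phi> x)"
    and g: "integrable M g" "\<And>x. h x * (\<phi> x - c)\<^sup>2 \<le> g x"
    and "0 < e"
  shows "\<bar>integral\<^sup>L M (\<lambda>x. h x * \<phi> x) - c * integral\<^sup>L M h\<bar>
           \<le> e * integral\<^sup>L M h + integral\<^sup>L M g / e"
proof -
  have pointwise: "\<bar>h x * (\<phi> x - c)\<bar> \<le> e * h x + g x / e" for x
  proof -
    have "\<bar>h x * (\<phi> x - c)\<bar> \<le> h x * (e + (\<phi> x - c)\<^sup>2 / e)"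
      using abs_le_add_square_div[OF \<open>0 < e\<close>] h(2)[of x] by (simp add: abs_mult mult_left_mono)
    also have "\<dots> = e * h x + h x * (\<phi> x - c)\<^sup>2 / e"
      by (simp add: algebra_simps)
    also have "\<dots> \<le> e * h x + g x / e"
      using g(2)[of x] \<open>0 < e\<close> by (simp add: divide_right_mono)
    finally show ?thesis .
  qed
  have "\<bar>integral\<^sup>L M (\<lambda>x. h x * \<phi> x) - c * integral\<^sup>L M h\<bar>
      = \<bar>integral\<^sup>L M (\<lambda>x. h x * (\<phi> x - c))\<bar>"
    using h(1) h\<phi> by (simp add: right_diff_distrib mult.commute)
  also have "\<dots> \<le> integral\<^sup>L M (\<lambda>x. \<bar>h x * (\<phi> x - c)\<bar>)"
    by (rule integral_abs_bound)
  also have "\<dots> \<le> integral\<^sup>L M (\<lambda>x. e * h x + g x / e)"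
    using h(1) h\<phi> g(1) pointwise by (intro integral_mono) (auto simp: right_diff_distrib)
  also have "\<dots> = e * integral\<^sup>L M h + integral\<^sup>L M g / e"
    using h(1) g(1) by simp
  finally show ?thesis .
qed

lemma weighted_mean_deviation:
  fixes h g \<phi> :: "'a \<Rightarrow> real"
  assumes h: "integrable M h" "\<And>x. 0 \<le> h x" "0 < integral\<^sup>L M h"
    and h\<phi>: "integrable M (\<lambda>x. h x * \<phi> x)"
    and g: "integrable M g" "\<And>x. h x * (\<phi> x - c)\<^sup>2 \<le> g x"
  shows "\<bar>integral\<^sup>L M (\<lambda>x. h x * \<phi> x) / integral\<^sup>L M h - c\<bar>
           \<le> (1 + integral\<^sup>L M g) / sqrt (integral\<^sup>L M h)"
proof -
  define H where "H = integral\<^sup>L M h"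
  have H: "0 < H" "sqrt H * sqrt H = H" using h(3) by (simp_all add: H_def)
  have "\<bar>integral\<^sup>L M (\<lambda>x. h x * \<phi> x) - c * H\<bar>
      \<le> 1 / sqrt H * H + integral\<^sup>L M g / (1 / sqrt H)"
    unfolding H_def using h(3) by (intro weighted_integral_deviation[OF h(1,2) h\<phi> g]) simp
  also have "\<dots> = (1 + integral\<^sup>L M g) / sqrt H * H"
    using H by (simp add: field_simps)
  finally show ?thesis
    using H(1) unfolding H_def[symmetric] by (simp add: field_simps)
qed

lemma weighted_mean_tendsto:
  fixes h :: "'b \<Rightarrow> 'a \<Rightarrow> real" and g \<phi> :: "'a \<Rightarrow> real"
  assumes mass: "filterlim (\<lambda>d. integral\<^sup>L M (h d)) at_top F"
    and g: "integrable M g"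
    and h: "\<forall>\<^sub>F d in F. integrable M (h d) \<and> integrable M (\<lambda>x. h d x * \<phi> x) \<and>
                        (\<forall>x. 0 \<le> h d x \<and> h d x * (\<phi> x - c)\<^sup>2 \<le> g x)"
  shows "((\<lambda>d. integral\<^sup>L M (\<lambda>x. h d x * \<phi> x) / integral\<^sup>L M (h d)) \<longlongrightarrow> c) F"
proof -
  have "((\<lambda>d. (1 + integral\<^sup>L M g) / sqrt (integral\<^sup>L M (h d))) \<longlongrightarrow> 0) F"
    by (intro tendsto_divide_0[OF tendsto_const] filterlim_at_top_imp_at_infinity
        filterlim_compose[OF sqrt_at_top mass])
  moreover have "\<forall>\<^sub>F d in F. norm (integral\<^sup>L M (\<lambda>x. h d x * \<phi> x) / integral\<^sup>L M (h d) - c)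
                   \<le> (1 + integral\<^sup>L M g) / sqrt (integral\<^sup>L M (h d))"
    using h mass[unfolded filterlim_at_top_dense, rule_format, of 0]
    by eventually_elim (simp add: weighted_mean_deviation g)
  ultimately show ?thesis
    by (subst LIM_zero_iff[symmetric]) (rule Lim_null_comparison)
qed

lemma integrable_mult_bounded_continuous:
  fixes h g :: "real \<Rightarrow> real"
  assumes "integrable lborel h" "continuous_on UNIV g" "\<And>x. \<bar>g x\<bar> \<le> B"
  shows "integrable lborel (\<lambda>x. h x * g x)"
proof (rule Bochner_Integration.integrable_bound)
  show "integrable lborel (\<lambda>x. B * h x)" using assms(1) by simp
  show "(\<lambda>x. h x * g x) \<in> borel_measurable lborel"
    using assms(1,2) borel_measurable_continuous_onI by (intro borel_measurable_times) auto
  show "AE x in lborel. norm (h x * g x) \<le> norm (B * h x)"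
    using assms(3)
    by (intro AE_I2) (metis abs_ge_zero abs_mult abs_of_nonneg mult.commute mult_right_mono
        order_trans real_norm_def)
qed

definition spectral_autocov :: "(real \<Rightarrow> real) \<Rightarrow> int \<Rightarrow> real" where
  "spectral_autocov f k = (\<integral>l. indicator {-pi..pi} l * f l * cos (of_int k * l) \<partial>lborel)"

lemma autocov_eq_spectral_autocov:
  assumes "has_spectral_density M X f"
  shows "integral\<^sup>L M (\<lambda>\<omega>. X t \<omega> * X s \<omega>) = spectral_autocov f (t - s)"
proof -
  define F where "F l = indicator {-pi..pi} l * f l" for l
  have F: "integrable lborel F"
    using assms unfolding has_spectral_density_def set_integrable_def F_def by simp
  have F_cos: "integrable lborel (\<lambda>l. F l * cos (of_int (t - s) * l))"
    and F_sin: "integrable lborel (\<lambda>l. F l * sin (of_int (t - s) * l))"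
    by (auto intro!: integrable_mult_bounded_continuous[OF F, where B = 1] continuous_intros)
  have fourier: "(\<lambda>l. indicator {-pi..pi} l *\<^sub>R (exp (\<i> * of_int (t - s) * of_real l) * of_real (f l)))
     = (\<lambda>l. of_real (F l * cos (of_int (t - s) * l)) + \<i> * of_real (F l * sin (of_int (t - s) * l)))"
  proof
    fix l
    have "exp (\<i> * of_int (t - s) * of_real l) = of_real (cos (of_int (t - s) * l)) + \<i> * of_real (sin (of_int (t - s) * l))"
      by (rule complex_eqI) (simp_all add: Re_exp Im_exp mult.assoc)
    then show "indicator {-pi..pi} l *\<^sub>R (exp (\<i> * of_int (t - s) * of_real l) * of_real (f l))
        = of_real (F l * cos (of_int (t - s) * l)) + \<i> * of_real (F l * sin (of_int (t - s) * l))"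
      by (simp add: F_def scaleR_conv_of_real algebra_simps)
  qed
  have "complex_of_real (integral\<^sup>L M (\<lambda>\<omega>. X t \<omega> * X s \<omega>))
      = integral\<^sup>L lborel (\<lambda>l. indicator {-pi..pi} l *\<^sub>R (exp (\<i> * of_int (t - s) * of_real l) * of_real (f l)))"
    using assms unfolding has_spectral_density_def set_lebesgue_integral_def by blast
  also have "\<dots> = integral\<^sup>L lborel
      (\<lambda>l. of_real (F l * cos (of_int (t - s) * l)) + \<i> * of_real (F l * sin (of_int (t - s) * l)))"
    unfolding fourier ..
  also have "\<dots> = of_real (integral\<^sup>L lborel (\<lambda>l. F l * cos (of_int (t - s) * l)))
                  + \<i> * of_real (integral\<^sup>L lborel (\<lambda>l. F l * sin (of_int (t - s) * l)))"
  proof -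
    have "complex_integrable lborel (\<lambda>l. of_real (F l * cos (of_int (t - s) * l)))"
      "complex_integrable lborel (\<lambda>l. \<i> * of_real (F l * sin (of_int (t - s) * l)))"
      using F_cos F_sin by (simp_all only: complex_of_real_integrable_eq integrable_mult_right)
    then show ?thesis
      by (simp only: Bochner_Integration.integral_add integral_mult_right_zero integral_complex_of_real)
  qed
  finally have "complex_of_real (integral\<^sup>L M (\<lambda>\<omega>. X t \<omega> * X s \<omega>)) = \<dots>" .
  from arg_cong[where f = Re, OF this] show ?thesis
    by (simp add: spectral_autocov_def F_def)
qed

lemma integrable_product_of_square_integrable:
  fixes u v :: "'a \<Rightarrow> real"
  assumes "u \<in> borel_measurable M" "v \<in> borel_measurable M"
    and "integrable M (\<lambda>\<omega>. (u \<omega>)\<^sup>2)" "integrable M (\<lambda>\<omega>. (v \<omega>)\<^sup>2)"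
  shows "integrable M (\<lambda>\<omega>. u \<omega> * v \<omega>)"
proof (rule Bochner_Integration.integrable_bound)
  show "integrable M (\<lambda>\<omega>. (u \<omega>)\<^sup>2 + (v \<omega>)\<^sup>2)" using assms(3,4) by simp
  show "(\<lambda>\<omega>. u \<omega> * v \<omega>) \<in> borel_measurable M" using assms(1,2) by simp
  show "AE \<omega> in M. norm (u \<omega> * v \<omega>) \<le> norm ((u \<omega>)\<^sup>2 + (v \<omega>)\<^sup>2)"
  proof (rule AE_I2)
    fix \<omega>
    have "2 * \<bar>u \<omega>\<bar> * \<bar>v \<omega>\<bar> \<le> (u \<omega>)\<^sup>2 + (v \<omega>)\<^sup>2"
      using sum_squares_bound[of "\<bar>u \<omega>\<bar>" "\<bar>v \<omega>\<bar>"] by simp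
    moreover have "0 \<le> \<bar>u \<omega>\<bar> * \<bar>v \<omega>\<bar>" by simp
    ultimately have "\<bar>u \<omega>\<bar> * \<bar>v \<omega>\<bar> \<le> (u \<omega>)\<^sup>2 + (v \<omega>)\<^sup>2" by linarith
    then show "norm (u \<omega> * v \<omega>) \<le> norm ((u \<omega>)\<^sup>2 + (v \<omega>)\<^sup>2)"
      by (simp add: abs_mult)
  qed
qed

lemma ar2_residual_second_moment:
  assumes "has_spectral_density M X f"
  shows "integral\<^sup>L M (\<lambda>\<omega>. (X t \<omega> - c1 * X (t - 1) \<omega> - c2 * X (t - 2) \<omega>)\<^sup>2)
       = spectral_autocov f 0 * (1 + c1\<^sup>2 + c2\<^sup>2) - 2 * c1 * spectral_autocov f 1
         - 2 * c2 * spectral_autocov f 2 + 2 * c1 * c2 * spectral_autocov f 1"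
proof -
  have X: "X r \<in> borel_measurable M" "integrable M (\<lambda>\<omega>. (X r \<omega>)\<^sup>2)" for r
    using assms unfolding has_spectral_density_def by blast+
  have prod: "integrable M (\<lambda>\<omega>. X r \<omega> * X r' \<omega>)" for r r'
    using X by (intro integrable_product_of_square_integrable)
  have cov: "integral\<^sup>L M (\<lambda>\<omega>. X r \<omega> * X r' \<omega>) = spectral_autocov f (r - r')" for r r'
    using assms by (rule autocov_eq_spectral_autocov)
  have "(\<lambda>\<omega>. (X t \<omega> - c1 * X (t - 1) \<omega> - c2 * X (t - 2) \<omega>)\<^sup>2) = (\<lambda>\<omega>.
      X t \<omega> * X t \<omega> + c1\<^sup>2 * (X (t - 1) \<omega> * X (t - 1) \<omega>) + c2\<^sup>2 * (X (t - 2) \<omega> * X (t - 2) \<omega>)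
      - 2 * c1 * (X t \<omega> * X (t - 1) \<omega>) - 2 * c2 * (X t \<omega> * X (t - 2) \<omega>)
      + 2 * c1 * c2 * (X (t - 1) \<omega> * X (t - 2) \<omega>))"
    by (simp add: power2_eq_square algebra_simps)
  then show ?thesis
    using prod by (simp add: cov algebra_simps)
qed

lemma nonneg_quadratic_linear_coeff_zero:
  fixes A B :: real
  assumes "0 \<le> A" "\<And>h. 0 \<le> A * h\<^sup>2 + 2 * B * h"
  shows "B = 0"
proof -
  define h where "h = - B / (A + 1)"
  have "h * (A + 1) = - B" using assms(1) by (simp add: h_def)
  then have "(A + 1)\<^sup>2 * (A * h\<^sup>2 + 2 * B * h) = - (B\<^sup>2 * (A + 2))" by algebra
  moreover have "0 \<le> (A + 1)\<^sup>2 * (A * h\<^sup>2 + 2 * B * h)" using assms(2)[of h] by simp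
  ultimately show ?thesis using assms(1)
    by (smt (verit) mult_pos_pos zero_less_power2)
qed

lemma ar2_predictor_normal_eqs:
  assumes X: "has_spectral_density M X f"
    and min: "\<And>c1 c2. integral\<^sup>L M (\<lambda>\<omega>. (X t \<omega> - a1 * X (t - 1) \<omega> - a2 * X (t - 2) \<omega>)\<^sup>2)
                    \<le> integral\<^sup>L M (\<lambda>\<omega>. (X t \<omega> - c1 * X (t - 1) \<omega> - c2 * X (t - 2) \<omega>)\<^sup>2)"
  shows "spectral_autocov f 0 * a1 + spectral_autocov f 1 * a2 = spectral_autocov f 1"
    and "spectral_autocov f 1 * a1 + spectral_autocov f 0 * a2 = spectral_autocov f 2"
proof -
  let ?\<gamma> = "spectral_autocov f"
  have "0 \<le> integral\<^sup>L M (\<lambda>\<omega>. X t \<omega> * X t \<omega>)" by simp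
  then have \<gamma>0: "0 \<le> ?\<gamma> 0" using autocov_eq_spectral_autocov[OF X, of t t] by simp
  note Q = min[unfolded ar2_residual_second_moment[OF X]]
  show "?\<gamma> 0 * a1 + ?\<gamma> 1 * a2 = ?\<gamma> 1"
  proof -
    have "0 \<le> ?\<gamma> 0 * h\<^sup>2 + 2 * (?\<gamma> 0 * a1 + ?\<gamma> 1 * a2 - ?\<gamma> 1) * h" for h
      using Q[of "a1 + h" a2] by (simp add: algebra_simps power2_eq_square)
    from nonneg_quadratic_linear_coeff_zero[OF \<gamma>0 this] show ?thesis by simp
  qed
  show "?\<gamma> 1 * a1 + ?\<gamma> 0 * a2 = ?\<gamma> 2"
  proof -
    have "0 \<le> ?\<gamma> 0 * h\<^sup>2 + 2 * (?\<gamma> 1 * a1 + ?\<gamma> 0 * a2 - ?\<gamma> 2) * h" for h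
      using Q[of a1 "a2 + h"] by (simp add: algebra_simps power2_eq_square)
    from nonneg_quadratic_linear_coeff_zero[OF \<gamma>0 this] show ?thesis by simp
  qed
qed

lemma ar2_density_integrable:
  assumes "set_integrable lborel {-pi..pi} fU" "0 < d" "d \<le> 1/2"
  shows "integrable lborel (\<lambda>l. indicator {-pi..pi} l * (fU l / ar2_denom lam0 d l))"
proof -
  have fU: "integrable lborel (\<lambda>l. indicator {-pi..pi} l * fU l)"
    using assms(1) unfolding set_integrable_def by simp
  note denom = ar2_denom_lower(1,2)[OF assms(2,3), of lam0]
  have "continuous_on UNIV (ar2_denom lam0 d)"
    unfolding ar2_denom_def[abs_def] by (intro continuous_intros)
  moreover have "ar2_denom lam0 d l \<noteq> 0" for l
    using denom(2)[of l] by simp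
  ultimately have cont: "continuous_on UNIV (\<lambda>l. 1 / ar2_denom lam0 d l)"
    by (intro continuous_intros) auto
  have bound: "\<bar>1 / ar2_denom lam0 d l\<bar> \<le> 1 / d^4" for l
    using denom[of l] assms(2) by (simp add: frac_le)
  from integrable_mult_bounded_continuous[OF fU cont bound] show ?thesis by simp
qed

lemma ar2_density_cos_deviation_le:
  assumes "0 < d" "d \<le> 1/2" "0 \<le> f" "k \<in> {1, 2}"
  shows "f / ar2_denom lam0 d l * (cos (of_int k * l) - cos (of_int k * lam0))\<^sup>2 \<le> 16 * f"
proof -
  have P: "0 < ar2_denom lam0 d l" "(cos l - cos lam0)\<^sup>2 \<le> ar2_denom lam0 d l"
    using assms(1,2) by (rule ar2_denom_lower(2,3))+
  have "(cos (of_int k * l) - cos (of_int k * lam0))\<^sup>2 \<le> (4 * \<bar>cos l - cos lam0\<bar>)\<^sup>2"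
    using abs_cos_int_mult_diff_le[OF assms(4), of l lam0] by (metis abs_ge_zero power2_abs power_mono)
  also have "\<dots> \<le> 16 * ar2_denom lam0 d l"
    using P(2) by (simp add: power_mult_distrib power2_abs)
  finally have "f / ar2_denom lam0 d l * (cos (of_int k * l) - cos (of_int k * lam0))\<^sup>2
      \<le> f / ar2_denom lam0 d l * (16 * ar2_denom lam0 d l)"
    using P(1) assms(3) by (intro mult_left_mono) simp_all
  also have "\<dots> = 16 * f" using P(1) by simp
  finally show ?thesis .
qed

context
  fixes lam0 m :: real and fU :: "real \<Rightarrow> real"
  assumes lam0: "0 < lam0" "lam0 < pi"
    and fU_nonneg: "\<And>l. l \<in> {-pi..pi} \<Longrightarrow> 0 \<le> fU l"
    and fU_int: "set_integrable lborel {-pi..pi} fU"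
    and fU_lower: "0 < m" "\<And>l. l \<in> {0..pi} \<Longrightarrow> m \<le> fU l"
begin

lemma ar2_spectral_mass_lower:
  assumes "0 < d" "d \<le> 1/2" "d \<le> lam0" "d \<le> pi - lam0"
  shows "2 * m / (13 * d) \<le> spectral_autocov (\<lambda>l. fU l / ar2_denom lam0 d l) 0"
proof -
  have "2 * m / (13 * d) = integral\<^sup>L lborel (\<lambda>l. indicator {lam0 - d..lam0 + d} l * (m / (13 * d\<^sup>2)))"
    using assms(1) by (simp add: power2_eq_square field_simps)
  also have "\<dots> \<le> integral\<^sup>L lborel (\<lambda>l. indicator {-pi..pi} l * (fU l / ar2_denom lam0 d l))"
  proof (rule integral_mono)
    show "integrable lborel (\<lambda>l. indicator {-pi..pi} l * (fU l / ar2_denom lam0 d l))"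
      using fU_int assms(1,2) by (rule ar2_density_integrable)
    fix l :: real
    have P: "0 < ar2_denom lam0 d l"
      using assms(1,2) by (rule ar2_denom_lower(2))
    show "indicator {lam0 - d..lam0 + d} l * (m / (13 * d\<^sup>2))
        \<le> indicator {-pi..pi} l * (fU l / ar2_denom lam0 d l)"
    proof (cases "l \<in> {lam0 - d..lam0 + d}")
      case True
      then have l: "l \<in> {0..pi}" "\<bar>l - lam0\<bar> \<le> d" using assms by auto
      have "m / (13 * d\<^sup>2) \<le> fU l / (13 * d\<^sup>2)"
        using fU_lower(2)[OF l(1)] by (simp add: divide_right_mono)
      also have "\<dots> \<le> fU l / ar2_denom lam0 d l"
        using P ar2_denom_upper[of d l lam0] l assms fU_lower
        by (intro divide_left_mono) (auto intro: order_trans[of 0 m])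
      finally show ?thesis using True l(1) by simp
    next
      case False
      have "0 \<le> indicator {-pi..pi} l * (fU l / ar2_denom lam0 d l)"
        using fU_nonneg P by (simp add: indicator_def)
      then show ?thesis using False by simp
    qed
  next
    show "integrable lborel (\<lambda>l. indicator {lam0 - d..lam0 + d} l * (m / (13 * d\<^sup>2)))"
      using assms(1) by (intro integrable_mult_left integrable_real_indicator) simp_all
  qed
  also have "\<dots> = spectral_autocov (\<lambda>l. fU l / ar2_denom lam0 d l) 0"
    by (simp add: spectral_autocov_def)
  finally show ?thesis .
qed

lemma ar2_spectral_mass_tendsto_top:
  "filterlim (\<lambda>d. spectral_autocov (\<lambda>l. fU l / ar2_denom lam0 d l) 0) at_top (at_right 0)"
proof (rule filterlim_at_top_mono)
  have "filterlim (\<lambda>d. 2 * m / 13 * inverse d) at_top (at_right 0)"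
    using fU_lower(1)
    by (intro filterlim_tendsto_pos_mult_at_top[OF tendsto_const _ filterlim_inverse_at_top_right]) simp
  then show "filterlim (\<lambda>d. 2 * m / (13 * d)) at_top (at_right 0)"
    by (simp add: field_simps)
  have "0 < min (1/2) (min lam0 (pi - lam0))" using lam0 by simp
  from eventually_at_right_real[OF this]
  show "\<forall>\<^sub>F d in at_right 0. 2 * m / (13 * d) \<le> spectral_autocov (\<lambda>l. fU l / ar2_denom lam0 d l) 0"
    by eventually_elim (auto intro: ar2_spectral_mass_lower)
qed

lemma ar2_autocorrelation_tendsto:
  assumes "k \<in> {1, 2}"
  shows "((\<lambda>d. spectral_autocov (\<lambda>l. fU l / ar2_denom lam0 d l) k
              / spectral_autocov (\<lambda>l. fU l / ar2_denom lam0 d l) 0)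
          \<longlongrightarrow> cos (of_int k * lam0)) (at_right 0)"
proof -
  let ?h = "\<lambda>d l. indicator {-pi..pi} l * (fU l / ar2_denom lam0 d l)"
  let ?\<phi> = "\<lambda>l. cos (of_int k * l)"
  have "((\<lambda>d. integral\<^sup>L lborel (\<lambda>l. ?h d l * ?\<phi> l) / integral\<^sup>L lborel (?h d)) \<longlongrightarrow> ?\<phi> lam0)
          (at_right 0)"
  proof (rule weighted_mean_tendsto)
    show "filterlim (\<lambda>d. integral\<^sup>L lborel (?h d)) at_top (at_right 0)"
      using ar2_spectral_mass_tendsto_top by (simp add: spectral_autocov_def)
    show "integrable lborel (\<lambda>l. 16 * (indicator {-pi..pi} l * fU l))"
      using fU_int by (simp add: set_integrable_def)
    have "\<forall>\<^sub>F d in at_right (0::real). d \<in> {0<..<1/2}" by (rule eventually_at_right_real) simp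
    then show "\<forall>\<^sub>F d in at_right 0. integrable lborel (?h d) \<and> integrable lborel (\<lambda>l. ?h d l * ?\<phi> l) \<and>
        (\<forall>l. 0 \<le> ?h d l \<and> ?h d l * (?\<phi> l - ?\<phi> lam0)\<^sup>2 \<le> 16 * (indicator {-pi..pi} l * fU l))"
    proof eventually_elim
      case (elim d)
      then have d: "0 < d" "d \<le> 1/2" by auto
      have h: "integrable lborel (?h d)"
        using fU_int d by (rule ar2_density_integrable)
      moreover have "integrable lborel (\<lambda>l. ?h d l * ?\<phi> l)"
        by (rule integrable_mult_bounded_continuous[OF h, where B = 1]) (auto intro!: continuous_intros)
      moreover have "0 \<le> ?h d l \<and> ?h d l * (?\<phi> l - ?\<phi> lam0)\<^sup>2 \<le> 16 * (indicator {-pi..pi} l * fU l)"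
        for l
      proof (cases "l \<in> {-pi..pi}")
        case True
        then show ?thesis
          using ar2_denom_lower(2)[OF d, of lam0 l] fU_nonneg[OF True]
            ar2_density_cos_deviation_le[OF d fU_nonneg[OF True] assms, of lam0 l]
          by simp
      qed simp
      ultimately show ?case by blast
    qed
  qed
  then show ?thesis by (simp add: spectral_autocov_def)
qed

end

lemma ar2_yule_walker_solution:
  fixes x y p q :: real
  assumes "x + p * y = p" "p * x + y = q" "p\<^sup>2 \<noteq> 1"
  shows "(x, y) = (p * (1 - q) / (1 - p\<^sup>2), (q - p\<^sup>2) / (1 - p\<^sup>2))"
proof -
  have "x * (1 - p\<^sup>2) - p * (1 - q) = (x + p * y - p) - p * (p * x + y - q)"
    and "y * (1 - p\<^sup>2) - (q - p\<^sup>2) = (p * x + y - q) - p * (x + p * y - p)"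
    by (simp_all add: power2_eq_square algebra_simps)
  then have "x * (1 - p\<^sup>2) = p * (1 - q)" "y * (1 - p\<^sup>2) = q - p\<^sup>2"
    using assms(1,2) by simp_all
  then show ?thesis using assms(3) by (simp add: eq_divide_eq)
qed

lemma ar2_yule_walker_tendsto:
  fixes \<gamma> :: "'b \<Rightarrow> int \<Rightarrow> real" and a :: "'b \<Rightarrow> real \<times> real"
  assumes \<rho>1: "((\<lambda>d. \<gamma> d 1 / \<gamma> d 0) \<longlongrightarrow> cos \<theta>) F"
    and \<rho>2: "((\<lambda>d. \<gamma> d 2 / \<gamma> d 0) \<longlongrightarrow> cos (2 * \<theta>)) F"
    and "sin \<theta> \<noteq> 0"
    and normal: "\<forall>\<^sub>F d in F. 0 < \<gamma> d 0 \<and> \<gamma> d 0 * fst (a d) + \<gamma> d 1 * snd (a d) = \<gamma> d 1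
                                \<and> \<gamma> d 1 * fst (a d) + \<gamma> d 0 * snd (a d) = \<gamma> d 2"
  shows "(a \<longlongrightarrow> (2 * cos \<theta>, -1)) F"
proof -
  let ?p = "\<lambda>d. \<gamma> d 1 / \<gamma> d 0" and ?q = "\<lambda>d. \<gamma> d 2 / \<gamma> d 0"
  let ?sol = "\<lambda>p q. (p * (1 - q) / (1 - p\<^sup>2), (q - p\<^sup>2) / (1 - p\<^sup>2))"
  have "(sin \<theta>)\<^sup>2 \<noteq> 0" using assms(3) by simp
  then have cos_sq: "(cos \<theta>)\<^sup>2 \<noteq> 1"
    using sin_cos_squared_add[of \<theta>] by linarith
  have "\<forall>\<^sub>F d in F. (?p d)\<^sup>2 \<noteq> 1"
    by (rule tendsto_imp_eventually_ne[OF tendsto_power[OF \<rho>1] cos_sq])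
  with normal have sol_eq: "\<forall>\<^sub>F d in F. ?sol (?p d) (?q d) = a d"
  proof eventually_elim
    case (elim d)
    then have "fst (a d) + ?p d * snd (a d) = ?p d" "?p d * fst (a d) + snd (a d) = ?q d"
      by (auto simp: field_simps)
    from ar2_yule_walker_solution[OF this] elim show ?case by simp
  qed
  have "?sol (cos \<theta>) (cos (2 * \<theta>)) = (2 * cos \<theta>, -1)"
    using cos_sq unfolding cos_double_cos by (simp add: field_simps)
  moreover have "((\<lambda>d. ?sol (?p d) (?q d)) \<longlongrightarrow> ?sol (cos \<theta>) (cos (2 * \<theta>))) F"
    using cos_sq by (intro tendsto_intros \<rho>1 \<rho>2) simp_all
  ultimately have "((\<lambda>d. ?sol (?p d) (?q d)) \<longlongrightarrow> (2 * cos \<theta>, -1)) F" by simp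
  from Lim_transform_eventually[OF this sol_eq] show ?thesis by simp
qed

lemma arccos_ar2_frequency_tendsto:
  fixes a :: "'b \<Rightarrow> real \<times> real"
  assumes a: "(a \<longlongrightarrow> (2 * cos \<theta>, -1)) F" and "0 < \<theta>" "\<theta> < pi"
  shows "((\<lambda>d. arccos (fst (a d) * (1 - snd (a d)) / (-4 * snd (a d)))) \<longlongrightarrow> \<theta>) F"
proof -
  have "((\<lambda>d. fst (a d) * (1 - snd (a d)) / (-4 * snd (a d))) \<longlongrightarrow> 2 * cos \<theta> * (1 - -1) / (-4 * -1)) F"
    using tendsto_fst[OF a] tendsto_snd[OF a] by (intro tendsto_intros) simp_all
  then have arg: "((\<lambda>d. fst (a d) * (1 - snd (a d)) / (-4 * snd (a d))) \<longlongrightarrow> cos \<theta>) F"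
    by simp
  have "isCont arccos (cos \<theta>)"
    using cos_monotone_0_pi[of 0 \<theta>] cos_monotone_0_pi[of \<theta> pi] assms(2,3)
    by (intro isCont_arccos) auto
  from isCont_tendsto_compose[OF this arg] show ?thesis
    using assms(2,3) by (simp add: arccos_cos)
qed

lemma continuous_on_Icc_INF_le:
  fixes f :: "real \<Rightarrow> real"
  assumes "continuous_on {a..b} f" "x \<in> {a..b}"
  shows "(INF y\<in>{a..b}. f y) \<le> f x"
proof -
  have "bdd_below (f ` {a..b})"
    using compact_continuous_image[OF assms(1) compact_Icc] by (intro bounded_imp_bdd_below compact_imp_bounded)
  then show ?thesis using assms(2) by (rule cINF_lower)
qed

theorem lemma2:
  fixes lam0 :: real
    and fU :: "real \<Rightarrow> real"
    and MU :: "'u measure" and U :: "int \<Rightarrow> 'u \<Rightarrow> real"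
    and M :: "real \<Rightarrow> 'a measure" and X :: "real \<Rightarrow> int \<Rightarrow> 'a \<Rightarrow> real"
    and a :: "real \<Rightarrow> real \<times> real"
  assumes lam0_pos: "0 < lam0" "lam0 < pi"
    and U: "has_spectral_density MU U fU"
    and fU_cont: "continuous_on {0..pi} fU"
    and fU_pos: "(INF l\<in>{0..pi}. fU l) > 0"
    and X: "\<And>\<delta>. \<delta> \<in> {0<..<1} \<Longrightarrow> has_spectral_density (M \<delta>) (X \<delta>)
              (\<lambda>l. fU l / ((cmod (1 - complex_of_real (1 - \<delta>) * exp (- \<i> * complex_of_real (l - lam0))))\<^sup>2
                          * (cmod (1 - complex_of_real (1 - \<delta>) * exp (- \<i> * complex_of_real (l + lam0))))\<^sup>2))"
    and a_min: "\<And>\<delta> t c1 c2. \<delta> \<in> {0<..<1} \<Longrightarrow>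
              integral\<^sup>L (M \<delta>) (\<lambda>\<omega>. (X \<delta> t \<omega> - fst (a \<delta>) * X \<delta> (t - 1) \<omega> - snd (a \<delta>) * X \<delta> (t - 2) \<omega>)\<^sup>2)
              \<le> integral\<^sup>L (M \<delta>) (\<lambda>\<omega>. (X \<delta> t \<omega> - c1 * X \<delta> (t - 1) \<omega> - c2 * X \<delta> (t - 2) \<omega>)\<^sup>2)"
  shows "(a \<longlongrightarrow> (2 * cos lam0, -1)) (at_right 0) \<and>
         ((\<lambda>\<delta>. arccos (fst (a \<delta>) * (1 - snd (a \<delta>)) / (-4 * snd (a \<delta>)))) \<longlongrightarrow> lam0) (at_right 0)"
proof -
  have fU_nonneg: "\<And>l. l \<in> {-pi..pi} \<Longrightarrow> 0 \<le> fU l" and fU_int: "set_integrable lborel {-pi..pi} fU"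
    using U unfolding has_spectral_density_def by auto
  note fU_lower = continuous_on_Icc_INF_le[OF fU_cont]
  define \<gamma> where "\<gamma> d = spectral_autocov (\<lambda>l. fU l / ar2_denom lam0 d l)" for d
  note \<rho> = ar2_autocorrelation_tendsto[OF lam0_pos fU_nonneg fU_int fU_pos fU_lower, folded \<gamma>_def]
  have X_ar2: "has_spectral_density (M d) (X d) (\<lambda>l. fU l / ar2_denom lam0 d l)" if "d \<in> {0<..<1}" for d
    using X[OF that] by (simp only: cmod_one_minus_exp_sq ar2_denom_def)
  have "\<forall>\<^sub>F d in at_right 0. 0 < \<gamma> d 0"
    using ar2_spectral_mass_tendsto_top[OF lam0_pos fU_nonneg fU_int fU_pos fU_lower]
    unfolding filterlim_at_top_dense \<gamma>_def by blast
  with eventually_at_right_real[OF zero_less_one]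
  have "\<forall>\<^sub>F d in at_right 0. 0 < \<gamma> d 0 \<and> \<gamma> d 0 * fst (a d) + \<gamma> d 1 * snd (a d) = \<gamma> d 1
                                         \<and> \<gamma> d 1 * fst (a d) + \<gamma> d 0 * snd (a d) = \<gamma> d 2"
  proof eventually_elim
    case (elim d)
    then have d: "d \<in> {0<..<1}" by simp
    from ar2_predictor_normal_eqs[OF X_ar2[OF d] a_min[OF d, of 0]] elim show ?case
      by (simp add: \<gamma>_def)
  qed
  then have a_lim: "(a \<longlongrightarrow> (2 * cos lam0, -1)) (at_right 0)"
    using \<rho>[of 1] \<rho>[of 2] sin_gt_zero[OF lam0_pos] by (intro ar2_yule_walker_tendsto) auto
  with arccos_ar2_frequency_tendsto[OF a_lim lam0_pos] show ?thesis by simp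
qed

end
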